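(* Let $n \geq 2$ and let $\sigma = (F_1, \ldots, F_n)$ be a sequence of sets of clauses. Run the following procedure on input $F_1, \ldots, F_n$: 1. Set $V_1 \leftarrow F_1 \setminus F_2$ and $C_1 \leftarrow F_1 \setminus V_1$. 2. For $i = 2, \ldots, n-1$ (in increasing order): (a) set $V_i \leftarrow F_i \setminus F_{i+1}$; (b) set $C_i \leftarrow (F_i \setminus F_{i-1}) \setminus V_i$; (c) for each clause $c \in V_i \cap F_{i-1}$: for $j = 1, \ldots, i-1$ (in increasing order), if $c \in C_j$, then set $C_j \leftarrow C_j \setminus \{c\}$, set $V_k \leftarrow V_k \cup \{c\}$ for every $k$ with $j \leq k \leq i-1$, and stop the loop over $j$ (proceed to the next clause $c$). 3. Set $C_n \leftarrow F_n \setminus F_{n-1}$ and $V_n \leftarrow \emptyset$. Then the procedure terminates, and on termination, for every $i$ with $1 \leq i \leq n$, the set $C_i$ is exactly the set of clauses that are cumulative in $F_i$ with respect to $\sigma$, and the set $V_i$ is exactly the set of clauses that are volatile in $F_i$ with respect to $\sigma$.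
   Context: A clause is a finite set (disjunction) of literals; only set membership of clauses matters here, so clauses may be treated as abstract elements. Given a sequence $\sigma = (F_1, \ldots, F_n)$ of sets of clauses and an index $1 \le i \le n$: - A clause $c$ is volatile in $F_i$ (with respect to $\sigma$) if $c \in F_i$ and there exists $j$ with $i < j \leq n$ such that $c \notin F_j$ (i.e., $c$ is removed at some later point). - A clause $c$ is cumulative in $F_i$ (with respect to $\sigma$) if $c \in F_i$, $c$ appears in $F_i$ for the first time in the sense that either $i = 1$ or $c \notin F_{i-1}$, and $c \in F_j$ for every $j$ with $i < j \leq n$ (i.e., $c$ is never removed afterwards). *)

theory Defs
  imports Main
begin

(* A sequence sigma = (F_1,...,F_n) is modelled as F :: nat => 'c set, of which
   only the values at positions 1..n matter. Clauses are abstract elements 'c. *)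

definition volatile :: "(nat \<Rightarrow> 'c set) \<Rightarrow> nat \<Rightarrow> nat \<Rightarrow> 'c \<Rightarrow> bool" where
  "volatile F n i c \<longleftrightarrow> c \<in> F i \<and> (\<exists>j. i < j \<and> j \<le> n \<and> c \<notin> F j)"

definition cumulative :: "(nat \<Rightarrow> 'c set) \<Rightarrow> nat \<Rightarrow> nat \<Rightarrow> 'c \<Rightarrow> bool" where
  "cumulative F n i c \<longleftrightarrow> c \<in> F i \<and> (i = 1 \<or> c \<notin> F (i - 1)) \<and>
     (\<forall>j. i < j \<and> j \<le> n \<longrightarrow> c \<in> F j)"

type_synonym 'c state = "(nat \<Rightarrow> 'c set) \<times> (nat \<Rightarrow> 'c set)"

function jloop :: "nat \<Rightarrow> nat \<Rightarrow> 'c \<Rightarrow> 'c state \<Rightarrow> 'c state" where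
  "jloop i j c (V, C) =
     (if j < i then
        (if c \<in> C j
         then (\<lambda>k. if j \<le> k \<and> k \<le> i - 1 then V k \<union> {c} else V k,
               C(j := C j - {c}))
         else jloop i (Suc j) c (V, C))
      else (V, C))"
  by pat_completeness auto
termination by (relation "measure (\<lambda>(i, j, _, _). i - j)") auto

(* Stage i (2 \<le> i \<le> n-1) of step 2. The clauses of V_i \<inter> F_{i-1} are processed
   in the order given by the enumeration function enum. *)
definition stage :: "('c set \<Rightarrow> 'c list) \<Rightarrow> (nat \<Rightarrow> 'c set) \<Rightarrow> nat \<Rightarrow> 'c state \<Rightarrow> 'c state" where
  "stage enum F i st =
     (let V1 = (fst st)(i := F i - F (Suc i));
          C1 = (snd st)(i := (F i - F (i - 1)) - V1 i)
      in fold (\<lambda>c. jloop i 1 c) (enum (V1 i \<inter> F (i - 1))) (V1, C1))"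

definition procedure :: "('c set \<Rightarrow> 'c list) \<Rightarrow> (nat \<Rightarrow> 'c set) \<Rightarrow> nat \<Rightarrow> 'c state" where
  "procedure enum F n =
     (let V0 = (\<lambda>_. {})(1 := F 1 - F 2);
          C0 = (\<lambda>_. {})(1 := F 1 - (F 1 - F 2));
          (V, C) = fold (stage enum F) [2..<n] (V0, C0)
      in (V(n := {}), C(n := F n - F (n - 1))))"

end

theory Submission
  imports Defs
begin

text \<open>
  After stage \<open>m\<close> of step 2, \<open>V\<close> and \<open>C\<close> hold at positions \<open>1..m\<close> exactly the volatile
  and cumulative clauses of the prefix \<open>F\<^sub>1, \<dots>, F\<^sub>m\<^sub>+\<^sub>1\<close>. Extending the prefix by
  \<open>F\<^sub>i\<^sub>+\<^sub>1\<close> changes the answer only for the clauses \<open>c \<in> F\<^sub>i\<^sub>-\<^sub>1 \<inter> F\<^sub>i\<close> missing from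
  \<open>F\<^sub>i\<^sub>+\<^sub>1\<close>: such a \<open>c\<close> becomes volatile along its maximal run ending at \<open>i\<close> and stops
  being cumulative at the start of that run. The run start is the unique position below \<open>i\<close>
  at which \<open>c\<close> was cumulative, so it is exactly the first \<open>j\<close> with \<open>c \<in> C\<^sub>j\<close> found by the
  inner loop.
\<close>

lemma cumulative_Suc:
  "k \<le> Suc m \<Longrightarrow> cumulative F (Suc m) k c \<longleftrightarrow> cumulative F m k c \<and> c \<in> F (Suc m)"
  by (auto simp: cumulative_def le_Suc_eq)

lemma volatile_Suc:
  "k \<le> m \<Longrightarrow> volatile F (Suc m) k c \<longleftrightarrow>
     volatile F m k c \<or> ((\<forall>j. k \<le> j \<and> j \<le> m \<longrightarrow> c \<in> F j) \<and> c \<notin> F (Suc m))"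
  unfolding volatile_def by (metis le_Suc_eq le_eq_less_or_eq)

lemma cumulative_start_le_iff:
  assumes "cumulative F m l c" "l \<le> m" "1 \<le> k" "k \<le> m"
  shows "(\<forall>j. k \<le> j \<and> j \<le> m \<longrightarrow> c \<in> F j) \<longleftrightarrow> l \<le> k"
proof
  assume run: "\<forall>j. k \<le> j \<and> j \<le> m \<longrightarrow> c \<in> F j"
  show "l \<le> k"
  proof (rule ccontr)
    assume "\<not> l \<le> k"
    then have "l \<noteq> 1" "c \<in> F (l - 1)" using assms(2,3) by (auto intro!: run[rule_format])
    then show False using assms(1) by (simp add: cumulative_def)
  qed
next
  assume "l \<le> k"
  then show "\<forall>j. k \<le> j \<and> j \<le> m \<longrightarrow> c \<in> F j"
    using assms(1) by (auto simp: cumulative_def le_less)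
qed

lemma ex_cumulative:
  "1 \<le> m \<Longrightarrow> c \<in> F m \<Longrightarrow> \<exists>l. 1 \<le> l \<and> l \<le> m \<and> cumulative F m l c"
proof (induction m rule: nat_induct_at_least)
  case base
  then show ?case by (auto simp: cumulative_def)
next
  case (Suc m)
  show ?case
  proof (cases "c \<in> F m")
    case True
    with Suc obtain l where "1 \<le> l" "l \<le> m" "cumulative F m l c" by blast
    then show ?thesis using Suc.prems by (intro exI[of _ l]) (simp add: cumulative_Suc)
  next
    case False
    then show ?thesis using Suc by (intro exI[of _ "Suc m"]) (auto simp: cumulative_def)
  qed
qed

lemma ex1_cumulative:
  assumes "1 \<le> m" "c \<in> F m"
  shows "\<exists>!l. 1 \<le> l \<and> l \<le> m \<and> cumulative F m l c"
proof (rule ex_ex1I)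
  show "\<exists>l. 1 \<le> l \<and> l \<le> m \<and> cumulative F m l c" using assms by (rule ex_cumulative)
next
  fix k l
  assume k: "1 \<le> k \<and> k \<le> m \<and> cumulative F m k c" and l: "1 \<le> l \<and> l \<le> m \<and> cumulative F m l c"
  have "l \<le> k" using cumulative_start_le_iff[of F m l c k] k l
    by (auto simp: cumulative_def le_less)
  moreover have "k \<le> l" using cumulative_start_le_iff[of F m k c l] k l
    by (auto simp: cumulative_def le_less)
  ultimately show "k = l" by simp
qed

definition run_start :: "(nat \<Rightarrow> 'c set) \<Rightarrow> nat \<Rightarrow> 'c \<Rightarrow> nat" where
  "run_start F m c = (THE l. 1 \<le> l \<and> l \<le> m \<and> cumulative F m l c)"

lemma run_start:
  assumes "1 \<le> m" "c \<in> F m"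
  shows "1 \<le> run_start F m c" "run_start F m c \<le> m" "cumulative F m (run_start F m c) c"
  using theI'[OF ex1_cumulative[of m c F, OF assms]] unfolding run_start_def by auto

lemma cumulative_iff_run_start:
  assumes "c \<in> F m" "1 \<le> l" "l \<le> m"
  shows "cumulative F m l c \<longleftrightarrow> l = run_start F m c"
  using ex1_cumulative[of m c F] run_start[of m c F] assms by auto

lemma run_start_le_iff:
  assumes "c \<in> F m" "1 \<le> k" "k \<le> m"
  shows "(\<forall>j. k \<le> j \<and> j \<le> m \<longrightarrow> c \<in> F j) \<longleftrightarrow> run_start F m c \<le> k"
  using assms run_start[of m c F] by (intro cumulative_start_le_iff) auto

lemma jloop_first_hit:
  assumes "j \<le> s" "s < i" "c \<in> C s" "\<And>l. j \<le> l \<Longrightarrow> l < s \<Longrightarrow> c \<notin> C l"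
  shows "jloop i j c (V, C) =
    (\<lambda>k. if s \<le> k \<and> k \<le> i - 1 then V k \<union> {c} else V k, C(s := C s - {c}))"
  using assms
proof (induction "s - j" arbitrary: j)
  case 0
  then show ?case by (simp add: fun_upd_def)
next
  case (Suc d)
  then have "j < s" "c \<notin> C j" by auto
  then have "jloop i j c (V, C) = jloop i (Suc j) c (V, C)" using Suc.prems(2) by simp
  also have "\<dots> = (\<lambda>k. if s \<le> k \<and> k \<le> i - 1 then V k \<union> {c} else V k, C(s := C s - {c}))"
    using Suc \<open>j < s\<close> by (intro Suc.hyps) auto
  finally show ?case .
qed

lemma fold_jloop:
  assumes "distinct xs"
    and "\<And>c. c \<in> set xs \<Longrightarrow> 1 \<le> s c \<and> s c < i"
    and "\<And>c l. c \<in> set xs \<Longrightarrow> 1 \<le> l \<Longrightarrow> l < i \<Longrightarrow> c \<in> C l \<longleftrightarrow> l = s c"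
  shows "fold (\<lambda>c. jloop i 1 c) xs (V, C) =
    (\<lambda>k. V k \<union> {c \<in> set xs. s c \<le> k \<and> k \<le> i - 1}, \<lambda>k. C k - {c \<in> set xs. s c = k})"
  using assms
proof (induction xs arbitrary: V C)
  case Nil
  then show ?case by simp
next
  case (Cons x xs)
  define V' where "V' = (\<lambda>k. if s x \<le> k \<and> k \<le> i - 1 then V k \<union> {x} else V k)"
  define C' where "C' = C(s x := C (s x) - {x})"
  have "jloop i 1 x (V, C) = (V', C')"
    unfolding V'_def C'_def using Cons.prems(2,3)[of x] by (intro jloop_first_hit) fastforce+
  moreover have "fold (\<lambda>c. jloop i 1 c) xs (V', C') =
    (\<lambda>k. V' k \<union> {c \<in> set xs. s c \<le> k \<and> k \<le> i - 1}, \<lambda>k. C' k - {c \<in> set xs. s c = k})"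
    using Cons.prems by (intro Cons.IH) (auto simp: C'_def)
  ultimately show ?case using Cons.prems(1) by (auto simp: V'_def C'_def fun_eq_iff)
qed

definition prefix_volatile :: "(nat \<Rightarrow> 'c set) \<Rightarrow> nat \<Rightarrow> nat \<Rightarrow> 'c set" where
  "prefix_volatile F m k = (if 1 \<le> k \<and> k \<le> m then {c. volatile F (Suc m) k c} else {})"

definition prefix_cumulative :: "(nat \<Rightarrow> 'c set) \<Rightarrow> nat \<Rightarrow> nat \<Rightarrow> 'c set" where
  "prefix_cumulative F m k = (if 1 \<le> k \<and> k \<le> m then {c. cumulative F (Suc m) k c} else {})"

lemma run_start_le_pred:
  assumes "2 \<le> m" "c \<in> F m" "c \<in> F (m - 1)"
  shows "run_start F m c \<le> m - 1"
proof -
  have "j = m - 1 \<or> j = m" if "m - 1 \<le> j" "j \<le> m" for j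
    using that by linarith
  then have "\<forall>j. m - 1 \<le> j \<and> j \<le> m \<longrightarrow> c \<in> F j"
    using assms by blast
  then show ?thesis using assms by (subst run_start_le_iff[symmetric]) auto
qed

lemma prefix_volatile_step:
  assumes "2 \<le> i"
  shows "prefix_volatile F i k =
    ((prefix_volatile F (i - 1))(i := F i - F (Suc i))) k \<union>
    {c \<in> (F i - F (Suc i)) \<inter> F (i - 1). run_start F i c \<le> k \<and> k \<le> i - 1}"
proof (cases "1 \<le> k \<and> k \<le> i - 1")
  case True
  have "(\<forall>j. k \<le> j \<and> j \<le> i \<longrightarrow> x \<in> F j) \<and> x \<notin> F (Suc i) \<longleftrightarrow>
      x \<in> (F i - F (Suc i)) \<inter> F (i - 1) \<and> run_start F i x \<le> k" for x
  proof
    assume run: "(\<forall>j. k \<le> j \<and> j \<le> i \<longrightarrow> x \<in> F j) \<and> x \<notin> F (Suc i)"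
    then have "x \<in> F i" "x \<in> F (i - 1)" using True by auto
    with run True show "x \<in> (F i - F (Suc i)) \<inter> F (i - 1) \<and> run_start F i x \<le> k"
      using run_start_le_iff[of x F i k] by auto
  next
    assume "x \<in> (F i - F (Suc i)) \<inter> F (i - 1) \<and> run_start F i x \<le> k"
    then show "(\<forall>j. k \<le> j \<and> j \<le> i \<longrightarrow> x \<in> F j) \<and> x \<notin> F (Suc i)"
      using run_start_le_iff[of x F i k] True by simp
  qed
  then show ?thesis
    using True volatile_Suc[of k i F] by (auto simp: prefix_volatile_def)
next
  case False
  have bounds: "1 \<le> run_start F i c" "run_start F i c \<le> i - 1"
    if "c \<in> F i" "c \<in> F (i - 1)" for c
    using that assms run_start[of i c F] run_start_le_pred[of i c F] by auto
  from False assms show ?thesis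
    by (auto simp: prefix_volatile_def volatile_def le_Suc_eq dest: bounds)
qed

lemma prefix_cumulative_step:
  assumes "2 \<le> i"
  shows "prefix_cumulative F i k =
    ((prefix_cumulative F (i - 1))(i := (F i - F (i - 1)) - (F i - F (Suc i)))) k -
    {c \<in> (F i - F (Suc i)) \<inter> F (i - 1). run_start F i c = k}"
proof (cases "1 \<le> k \<and> k \<le> i - 1")
  case True
  have "x \<in> (F i - F (Suc i)) \<inter> F (i - 1) \<and> run_start F i x = k \<longleftrightarrow> x \<notin> F (Suc i)"
    if "cumulative F i k x" for x
  proof -
    have "x \<in> F i" "x \<in> F (i - 1)"
      using that True assms by (auto simp: cumulative_def le_less)
    then show ?thesis using cumulative_iff_run_start[of x F i k] that True by auto
  qed
  then show ?thesis
    using True cumulative_Suc[of k i F] by (auto simp: prefix_cumulative_def)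
next
  case False
  have "run_start F i c \<le> i - 1" if "c \<in> (F i - F (Suc i)) \<inter> F (i - 1)" for c
    using that assms run_start_le_pred[of i c F] by auto
  with False assms show ?thesis
    by (auto simp: prefix_cumulative_def cumulative_def le_Suc_eq)
qed

lemma stage_prefix:
  assumes "2 \<le> i" and "finite (F i)"
    and enum: "\<And>S. finite S \<Longrightarrow> distinct (enum S) \<and> set (enum S) = S"
  shows "stage enum F i (prefix_volatile F (i - 1), prefix_cumulative F (i - 1)) =
    (prefix_volatile F i, prefix_cumulative F i)"
proof -
  define W where "W = (F i - F (Suc i)) \<inter> F (i - 1)"
  define V1 where "V1 = (prefix_volatile F (i - 1))(i := F i - F (Suc i))"
  define C1 where "C1 = (prefix_cumulative F (i - 1))(i := (F i - F (i - 1)) - (F i - F (Suc i)))"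
  have enum_W: "distinct (enum W)" "set (enum W) = W"
    using enum[of W] assms(2) by (auto simp: W_def)
  have "stage enum F i (prefix_volatile F (i - 1), prefix_cumulative F (i - 1)) =
      fold (\<lambda>c. jloop i 1 c) (enum W) (V1, C1)"
    unfolding stage_def V1_def C1_def W_def Let_def by simp
  also have "\<dots> = (\<lambda>k. V1 k \<union> {c \<in> set (enum W). run_start F i c \<le> k \<and> k \<le> i - 1},
      \<lambda>k. C1 k - {c \<in> set (enum W). run_start F i c = k})"
  proof (rule fold_jloop)
    show "distinct (enum W)" by (fact enum_W)
    show "1 \<le> run_start F i c \<and> run_start F i c < i" if "c \<in> set (enum W)" for c
      using that enum_W(2) assms(1) run_start[of i c F] run_start_le_pred[of i c F]
      by (auto simp: W_def)
    show "c \<in> C1 l \<longleftrightarrow> l = run_start F i c"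
      if "c \<in> set (enum W)" "1 \<le> l" "l < i" for c l
      using that enum_W(2) cumulative_iff_run_start[of c F i l]
      by (auto simp: W_def C1_def prefix_cumulative_def)
  qed
  also have "\<dots> = (prefix_volatile F i, prefix_cumulative F i)"
    unfolding enum_W(2) unfolding V1_def C1_def W_def
    by (simp add: fun_eq_iff prefix_volatile_step[OF assms(1)] prefix_cumulative_step[OF assms(1)])
  finally show ?thesis .
qed

lemma fold_stages:
  assumes "\<And>i. 1 \<le> i \<Longrightarrow> i \<le> n \<Longrightarrow> finite (F i)"
    and "\<And>S. finite S \<Longrightarrow> distinct (enum S) \<and> set (enum S) = S"
    and "1 \<le> m" "m < n"
  shows "fold (stage enum F) [2..<Suc m]
      ((\<lambda>_. {})(1 := F 1 - F 2), (\<lambda>_. {})(1 := F 1 - (F 1 - F 2))) =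
    (prefix_volatile F m, prefix_cumulative F m)"
  using assms(3,4)
proof (induction m rule: nat_induct_at_least)
  case base
  show ?case
    by (auto simp: fun_eq_iff prefix_volatile_def prefix_cumulative_def volatile_def
        cumulative_def numeral_2_eq_2 le_Suc_eq)
next
  case (Suc m)
  then show ?case using assms(1,2) stage_prefix[of "Suc m" F enum] by simp
qed

theorem mainTheorem1:
  fixes F :: "nat \<Rightarrow> 'c set" and n :: nat and enum :: "'c set \<Rightarrow> 'c list"
  assumes "n \<ge> 2"
    and "\<And>i. 1 \<le> i \<Longrightarrow> i \<le> n \<Longrightarrow> finite (F i)"
    and "\<And>S. finite S \<Longrightarrow> distinct (enum S) \<and> set (enum S) = S"
  shows "\<forall>i. 1 \<le> i \<and> i \<le> n \<longrightarrow>
           snd (procedure enum F n) i = {c. cumulative F n i c} \<and>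
           fst (procedure enum F n) i = {c. volatile F n i c}"
proof -
  have "[2..<n] = [2..<Suc (n - 1)]" using assms(1) by simp
  then have "fold (stage enum F) [2..<n]
      ((\<lambda>_. {})(1 := F 1 - F 2), (\<lambda>_. {})(1 := F 1 - (F 1 - F 2))) =
    (prefix_volatile F (n - 1), prefix_cumulative F (n - 1))"
    using fold_stages[of n F enum "n - 1", OF assms(2,3)] assms(1) by simp
  then have "procedure enum F n =
      ((prefix_volatile F (n - 1))(n := {}), (prefix_cumulative F (n - 1))(n := F n - F (n - 1)))"
    unfolding procedure_def Let_def by simp
  then show ?thesis
    using assms(1)
    by (auto simp: prefix_volatile_def prefix_cumulative_def cumulative_def volatile_def)
qed

end
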